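(* Let $\gamma$ be a unit speed line of curvature ($\tau_g\equiv 0$) on a smooth oriented surface $M\subset E^3$, with nowhere-vanishing normal curvature $k_n$, whose position vector always lies in the plane spanned by $\{T,V\}$. Then $\gamma$ is an isophotic curve if and only if $k_n$ is a constant function.
   Context: For a unit speed curve $\gamma$ on an oriented surface $M\subset E^3$, the Darboux frame is $T=\gamma'$, $U$ = unit normal of $M$ along $\gamma$, $V = U\times T$, satisfying $T' = k_g V + k_n U$, $V' = -k_g T + \tau_g U$, $U' = -k_n T - \tau_g V$; here $k_g$, $k_n$, $\tau_g$ are the geodesic curvature, normal curvature and geodesic torsion. The curve $\gamma$ is an isophotic curve if there is a fixed unit vector $d$ and a constant angle $\phi$ with $\langle U, d\rangle = \cos\phi$ along $\gamma$. "Position vector lies in the plane spanned by $\{T,V\}$" means $\gamma(s) = \mu_1(s)T(s) + \mu_2(s)V(s)$ for differentiable functions $\mu_1,\mu_2$. *)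

theory Defs
  imports "HOL-Analysis.Analysis"
begin

text \<open>T = gamma', U is the unit surface normal along gamma, V = U x T.\<close>
definition darboux_frame ::
  "real set \<Rightarrow> (real \<Rightarrow> real^3) \<Rightarrow> (real \<Rightarrow> real^3) \<Rightarrow> (real \<Rightarrow> real^3) \<Rightarrow> (real \<Rightarrow> real^3)
   \<Rightarrow> (real \<Rightarrow> real) \<Rightarrow> (real \<Rightarrow> real) \<Rightarrow> (real \<Rightarrow> real) \<Rightarrow> bool" where
  "darboux_frame I \<gamma> T V U kg kn tg \<longleftrightarrow>
     (\<forall>s\<in>I.
        (\<gamma> has_vector_derivative T s) (at s) \<and>
        norm (T s) = 1 \<and> norm (U s) = 1 \<and> T s \<bullet> U s = 0 \<and>
        V s = cross3 (U s) (T s) \<and>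
        (T has_vector_derivative (kg s *\<^sub>R V s + kn s *\<^sub>R U s)) (at s) \<and>
        (V has_vector_derivative (- kg s *\<^sub>R T s + tg s *\<^sub>R U s)) (at s) \<and>
        (U has_vector_derivative (- kn s *\<^sub>R T s - tg s *\<^sub>R V s)) (at s))"

definition isophotic :: "real set \<Rightarrow> (real \<Rightarrow> real^3) \<Rightarrow> bool" where
  "isophotic I U \<longleftrightarrow> (\<exists>d \<phi>. norm d = 1 \<and> (\<forall>s\<in>I. U s \<bullet> d = cos \<phi>))"

end

theory Submission
  imports Defs
begin

text \<open>
  Along a line of curvature the Darboux equations reduce to \<open>V' = -kg T\<close> and \<open>U' = -kn T\<close>.
  Differentiating \<open>\<gamma> \<bullet> U = 0\<close>, \<open>\<gamma> \<bullet> T = \<mu>1\<close> and \<open>\<gamma> \<bullet> V = \<mu>2\<close> gives \<open>kn \<mu>1 = 0\<close>,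
  \<open>1 + kg \<mu>2 = 0\<close> and \<open>\<mu>2' = 0\<close>, so \<open>kg\<close> is a nonzero constant. If \<open>U \<bullet> d\<close> is
  constant, then \<open>T \<bullet> d = 0\<close>, \<open>V \<bullet> d\<close> is constant, and differentiating \<open>T \<bullet> d\<close> expresses
  \<open>kn\<close> as a ratio of constants. Conversely, if \<open>kn\<close> is constant then the Darboux vector
  \<open>kg U - kn V\<close> is a constant nonzero vector making a constant angle with \<open>U\<close>.
\<close>

lemma norm_cross3_orthonormal:
  assumes "norm u = 1" "norm t = 1" "t \<bullet> u = 0"
  shows "norm (cross3 u t) = 1"
proof -
  have "(norm (cross3 u t))\<^sup>2 = 1"
    using norm_cross_dot[of u t] assms by (simp add: inner_commute)
  then show ?thesis using norm_ge_zero[of "cross3 u t"] by (auto simp: power2_eq_1_iff)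
qed

lemma orthogonal_to_cross3_frame_eq_0:
  assumes "norm u = 1" "norm t = 1" "t \<bullet> u = 0"
    and "x \<bullet> t = 0" "x \<bullet> u = 0" "x \<bullet> cross3 u t = 0"
  shows "x = 0"
proof -
  have "cross3 x (cross3 u t) = 0"
    using assms(4,5) by (simp add: Lagrange)
  moreover have "cross3 u t \<noteq> 0"
    using norm_cross3_orthonormal[OF assms(1-3)] by auto
  ultimately show ?thesis
    using norm_and_cross_eq_0[of x "cross3 u t"] assms(6) by blast
qed

lemma has_real_derivative_inner:
  fixes f g :: "real \<Rightarrow> 'a::real_inner"
  assumes "(f has_vector_derivative f') (at s)" "(g has_vector_derivative g') (at s)"
  shows "((\<lambda>t. f t \<bullet> g t) has_real_derivative (f' \<bullet> g s + f s \<bullet> g')) (at s)"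
  using bounded_bilinear.has_vector_derivative[OF bounded_bilinear_inner assms]
  by (simp add: has_real_derivative_iff_has_vector_derivative add.commute)

lemma has_real_derivative_zero_constant:
  fixes f :: "real \<Rightarrow> real"
  assumes "convex S" "\<And>x. x \<in> S \<Longrightarrow> (f has_real_derivative 0) (at x)"
  shows "\<exists>c. \<forall>x\<in>S. f x = c"
  using assms by (intro has_field_derivative_zero_constant) (auto intro: has_field_derivative_at_within)

lemma has_real_derivative_constant_on_open:
  fixes f :: "real \<Rightarrow> real"
  assumes "(f has_real_derivative D) (at s)" "open S" "s \<in> S" "\<And>x. x \<in> S \<Longrightarrow> f x = c"
  shows "D = 0"
proof -
  have "((\<lambda>_. c) has_real_derivative D) (at s)"
    using has_field_derivative_transform_within_open[OF assms] .
  then show ?thesis using DERIV_const DERIV_unique by blast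
qed

lemma isophotic_if_inner_constant:
  assumes "\<And>s. s \<in> I \<Longrightarrow> norm (U s) = 1" "\<And>s. s \<in> I \<Longrightarrow> U s \<bullet> e = k" "e \<noteq> 0"
  shows "isophotic I U"
proof (cases "I = {}")
  case False
  then obtain s where "s \<in> I" by blast
  have "\<bar>k\<bar> \<le> norm e"
    using Cauchy_Schwarz_ineq2[of "U s" e] assms(1,2) \<open>s \<in> I\<close> by simp
  then have "\<bar>k / norm e\<bar> \<le> 1"
    using assms(3) by (simp add: field_simps)
  then have "U x \<bullet> (e /\<^sub>R norm e) = cos (arccos (k / norm e))" if "x \<in> I" for x
    using assms(2)[OF that] by (simp add: cos_arccos_abs divide_inverse mult.commute)
  moreover have "norm (e /\<^sub>R norm e) = 1" using assms(3) by simp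
  ultimately show ?thesis unfolding isophotic_def by blast
qed (auto simp: isophotic_def intro: exI[of _ "axis 1 1"])

locale line_of_curvature =
  fixes a b :: real
    and \<gamma> T V U :: "real \<Rightarrow> real^3"
    and kg kn tg :: "real \<Rightarrow> real"
  assumes interval_nonempty: "a < b"
    and frame: "darboux_frame {a<..<b} \<gamma> T V U kg kn tg"
    and tg_zero: "\<And>s. s \<in> {a<..<b} \<Longrightarrow> tg s = 0"
begin

lemma
  assumes s: "s \<in> {a<..<b}"
  shows gamma_deriv: "(\<gamma> has_vector_derivative T s) (at s)"
    and T_deriv: "(T has_vector_derivative (kg s *\<^sub>R V s + kn s *\<^sub>R U s)) (at s)"
    and V_deriv: "(V has_vector_derivative (- kg s *\<^sub>R T s)) (at s)"
    and U_deriv: "(U has_vector_derivative (- kn s *\<^sub>R T s)) (at s)"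
proof -
  have "(\<gamma> has_vector_derivative T s) (at s) \<and>
      (T has_vector_derivative (kg s *\<^sub>R V s + kn s *\<^sub>R U s)) (at s) \<and>
      (V has_vector_derivative (- kg s *\<^sub>R T s + tg s *\<^sub>R U s)) (at s) \<and>
      (U has_vector_derivative (- kn s *\<^sub>R T s - tg s *\<^sub>R V s)) (at s)"
    using frame s unfolding darboux_frame_def by blast
  then show "(\<gamma> has_vector_derivative T s) (at s)"
    "(T has_vector_derivative (kg s *\<^sub>R V s + kn s *\<^sub>R U s)) (at s)"
    "(V has_vector_derivative (- kg s *\<^sub>R T s)) (at s)"
    "(U has_vector_derivative (- kn s *\<^sub>R T s)) (at s)"
    using tg_zero[OF s] by simp_all
qed

lemma
  assumes s: "s \<in> {a<..<b}"
  shows norm_T: "norm (T s) = 1" and norm_U: "norm (U s) = 1" and norm_V: "norm (V s) = 1"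
    and inner_T_U: "T s \<bullet> U s = 0" and inner_V_T: "V s \<bullet> T s = 0" and inner_V_U: "V s \<bullet> U s = 0"
    and V_eq: "V s = cross3 (U s) (T s)"
  using frame s norm_cross3_orthonormal dot_cross_self
  unfolding darboux_frame_def by (auto simp: inner_commute)

lemmas frame_inner_simps [simp] =
  norm_T[unfolded norm_eq_1] norm_U[unfolded norm_eq_1] norm_V[unfolded norm_eq_1]
  inner_T_U inner_T_U[unfolded inner_commute[of "T _"]]
  inner_V_T inner_V_T[unfolded inner_commute[of "V _"]]
  inner_V_U inner_V_U[unfolded inner_commute[of "V _"]]

lemma interval_point:
  obtains s0 where "s0 \<in> {a<..<b}"
  using interval_nonempty dense[of a b] by auto

lemma deriv_zero_if_constant:
  assumes "(f has_real_derivative D) (at s)" "s \<in> {a<..<b}" "\<And>x. x \<in> {a<..<b} \<Longrightarrow> f x = c"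
  shows "D = 0"
  using has_real_derivative_constant_on_open[OF assms(1) _ assms(2,3)] by simp

lemma isophotic_imp_kn_constant:
  assumes kg: "\<And>s. s \<in> {a<..<b} \<Longrightarrow> kg s = k" and "k \<noteq> 0"
    and kn_nonzero: "\<And>s. s \<in> {a<..<b} \<Longrightarrow> kn s \<noteq> 0"
    and "isophotic {a<..<b} U"
  shows "\<exists>c. \<forall>s\<in>{a<..<b}. kn s = c"
proof -
  obtain d \<phi> where "norm d = 1" and U_d: "\<And>s. s \<in> {a<..<b} \<Longrightarrow> U s \<bullet> d = cos \<phi>"
    using \<open>isophotic {a<..<b} U\<close> unfolding isophotic_def by blast
  have const_d: "((\<lambda>_. d) has_vector_derivative 0) (at s)" for s
    by (rule has_vector_derivative_const)
  have T_d: "T s \<bullet> d = 0" if s: "s \<in> {a<..<b}" for s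
  proof -
    have "((\<lambda>t. U t \<bullet> d) has_real_derivative (- kn s * (T s \<bullet> d))) (at s)"
      using has_real_derivative_inner[OF U_deriv[OF s] const_d] by simp
    then have "- kn s * (T s \<bullet> d) = 0"
      by (rule deriv_zero_if_constant[OF _ s U_d])
    then show ?thesis using kn_nonzero[OF s] by simp
  qed
  obtain v where V_d: "\<And>s. s \<in> {a<..<b} \<Longrightarrow> V s \<bullet> d = v"
  proof -
    have "((\<lambda>t. V t \<bullet> d) has_real_derivative 0) (at s)" if s: "s \<in> {a<..<b}" for s
      using has_real_derivative_inner[OF V_deriv[OF s] const_d] T_d[OF s] by simp
    then show ?thesis
      using has_real_derivative_zero_constant[of "{a<..<b}" "\<lambda>t. V t \<bullet> d"] that by blast
  qed
  have relation: "k * v + kn s * cos \<phi> = 0" if s: "s \<in> {a<..<b}" for s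
  proof -
    have "((\<lambda>t. T t \<bullet> d) has_real_derivative (kg s * (V s \<bullet> d) + kn s * (U s \<bullet> d))) (at s)"
      using has_real_derivative_inner[OF T_deriv[OF s] const_d] by (simp add: inner_add_left)
    then have "kg s * (V s \<bullet> d) + kn s * (U s \<bullet> d) = 0"
      by (rule deriv_zero_if_constant[OF _ s T_d])
    then show ?thesis using kg[OF s] V_d[OF s] U_d[OF s] by simp
  qed
  obtain s0 where s0: "s0 \<in> {a<..<b}"
    by (rule interval_point)
  have "cos \<phi> \<noteq> 0"
  proof
    assume "cos \<phi> = 0"
    then have "v = 0" using relation[OF s0] \<open>k \<noteq> 0\<close> by simp
    then have "d = 0"
      using orthogonal_to_cross3_frame_eq_0[OF norm_U[OF s0] norm_T[OF s0] inner_T_U[OF s0]]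
        T_d[OF s0] U_d[OF s0] V_d[OF s0] \<open>cos \<phi> = 0\<close> V_eq[OF s0]
      by (simp add: inner_commute)
    then show False using \<open>norm d = 1\<close> by simp
  qed
  then have "kn s = - k * v / cos \<phi>" if "s \<in> {a<..<b}" for s
    using relation[OF that] by (simp add: field_simps add_eq_0_iff2)
  then show ?thesis by blast
qed

lemma kn_constant_imp_isophotic:
  assumes kg: "\<And>s. s \<in> {a<..<b} \<Longrightarrow> kg s = k" and "k \<noteq> 0"
    and kn: "\<And>s. s \<in> {a<..<b} \<Longrightarrow> kn s = c"
  shows "isophotic {a<..<b} U"
proof -
  define E where "E t = k *\<^sub>R U t - c *\<^sub>R V t" for t
  obtain e where E_e: "\<And>s. s \<in> {a<..<b} \<Longrightarrow> E s = e"
  proof (rule has_vector_derivative_zero_constant[of "{a<..<b}" E])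
    fix s assume s: "s \<in> {a<..<b}"
    have "(E has_vector_derivative
        (k *\<^sub>R (- kn s *\<^sub>R T s) + 0 *\<^sub>R U s - (c *\<^sub>R (- kg s *\<^sub>R T s) + 0 *\<^sub>R V s))) (at s)"
      unfolding E_def
      by (intro has_vector_derivative_diff has_vector_derivative_scaleR DERIV_const U_deriv V_deriv s)
    then have "(E has_vector_derivative 0) (at s)"
      using kn[OF s] kg[OF s] by (simp add: mult.commute)
    then show "(E has_vector_derivative 0) (at s within {a<..<b})"
      by (rule has_vector_derivative_at_within)
  qed auto
  have U_e: "U s \<bullet> e = k" if "s \<in> {a<..<b}" for s
    using E_e[OF that, symmetric] that by (simp add: E_def inner_diff_right)
  obtain s0 where "s0 \<in> {a<..<b}"
    by (rule interval_point)
  then have "e \<noteq> 0"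
    using U_e \<open>k \<noteq> 0\<close> inner_zero_right by metis
  with norm_U U_e show ?thesis
    by (rule isophotic_if_inner_constant)
qed

end

locale tangential_line_of_curvature = line_of_curvature +
  fixes \<mu>1 \<mu>2 :: "real \<Rightarrow> real"
  assumes kn_nonzero: "\<And>s. s \<in> {a<..<b} \<Longrightarrow> kn s \<noteq> 0"
    and mu2_differentiable: "\<And>s. s \<in> {a<..<b} \<Longrightarrow> \<mu>2 differentiable (at s)"
    and position: "\<And>s. s \<in> {a<..<b} \<Longrightarrow> \<gamma> s = \<mu>1 s *\<^sub>R T s + \<mu>2 s *\<^sub>R V s"
begin

lemma
  assumes "s \<in> {a<..<b}"
  shows inner_gamma_U: "\<gamma> s \<bullet> U s = 0"
    and inner_gamma_T: "\<gamma> s \<bullet> T s = \<mu>1 s"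
    and inner_gamma_V: "\<gamma> s \<bullet> V s = \<mu>2 s"
  using position[OF assms] assms by (simp_all add: inner_add_left)

lemma mu1_zero:
  assumes s: "s \<in> {a<..<b}"
  shows "\<mu>1 s = 0"
proof -
  have "((\<lambda>t. \<gamma> t \<bullet> U t) has_real_derivative (- kn s * \<mu>1 s)) (at s)"
    using has_real_derivative_inner[OF gamma_deriv[OF s] U_deriv[OF s]] s
    by (simp add: inner_gamma_T)
  then have "- kn s * \<mu>1 s = 0"
    by (rule deriv_zero_if_constant[OF _ s inner_gamma_U])
  then show ?thesis using kn_nonzero[OF s] by simp
qed

lemma kg_mult_mu2:
  assumes s: "s \<in> {a<..<b}"
  shows "kg s * \<mu>2 s = -1"
proof -
  have "((\<lambda>t. \<gamma> t \<bullet> T t) has_real_derivative (1 + kg s * \<mu>2 s)) (at s)"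
    using has_real_derivative_inner[OF gamma_deriv[OF s] T_deriv[OF s]] s
    by (simp add: inner_add_right inner_gamma_U inner_gamma_V)
  then have "1 + kg s * \<mu>2 s = 0"
    by (rule deriv_zero_if_constant[OF _ s, where c=0]) (simp add: inner_gamma_T mu1_zero)
  then show ?thesis by simp
qed

lemma mu2_constant: "\<exists>m. \<forall>s\<in>{a<..<b}. \<mu>2 s = m"
proof (rule has_real_derivative_zero_constant)
  fix s assume s: "s \<in> {a<..<b}"
  have \<mu>2_deriv: "(\<mu>2 has_real_derivative deriv \<mu>2 s) (at s)"
    using mu2_differentiable[OF s] DERIV_deriv_iff_real_differentiable by blast
  have "((\<lambda>t. \<gamma> t \<bullet> V t) has_real_derivative 0) (at s)"
    using has_real_derivative_inner[OF gamma_deriv[OF s] V_deriv[OF s]] s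
    by (simp add: inner_gamma_T mu1_zero)
  from DERIV_diff[OF \<mu>2_deriv this]
  have "deriv \<mu>2 s - 0 = 0"
    by (rule deriv_zero_if_constant[OF _ s, where c=0]) (simp add: inner_gamma_V)
  then show "(\<mu>2 has_real_derivative 0) (at s)"
    using \<mu>2_deriv by simp
qed simp

lemma kg_constant:
  obtains k where "k \<noteq> 0" "\<And>s. s \<in> {a<..<b} \<Longrightarrow> kg s = k"
proof -
  obtain m where m: "\<And>s. s \<in> {a<..<b} \<Longrightarrow> \<mu>2 s = m"
    using mu2_constant by blast
  obtain s0 where "s0 \<in> {a<..<b}"
    by (rule interval_point)
  then have "m \<noteq> 0"
    using kg_mult_mu2 m by force
  show ?thesis
  proof (rule that)
    show "- 1 / m \<noteq> 0" using \<open>m \<noteq> 0\<close> by simp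
    fix s assume s: "s \<in> {a<..<b}"
    show "kg s = - 1 / m"
      using kg_mult_mu2[OF s] m[OF s] \<open>m \<noteq> 0\<close> by (simp add: field_simps)
  qed
qed

end

theorem corollary4p2:
  fixes a b :: real
    and \<gamma> T V U :: "real \<Rightarrow> real^3"
    and kg kn tg \<mu>1 \<mu>2 :: "real \<Rightarrow> real"
  assumes "a < b"
    and frame: "darboux_frame {a<..<b} \<gamma> T V U kg kn tg"
    and line_of_curvature: "\<forall>s\<in>{a<..<b}. tg s = 0"
    and kn_nonzero: "\<forall>s\<in>{a<..<b}. kn s \<noteq> 0"
    and mu_diff: "\<forall>s\<in>{a<..<b}. \<mu>1 differentiable (at s) \<and> \<mu>2 differentiable (at s)"
    and position: "\<forall>s\<in>{a<..<b}. \<gamma> s = \<mu>1 s *\<^sub>R T s + \<mu>2 s *\<^sub>R V s"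
  shows "isophotic {a<..<b} U \<longleftrightarrow> (\<exists>c. \<forall>s\<in>{a<..<b}. kn s = c)"
proof -
  interpret tangential_line_of_curvature a b \<gamma> T V U kg kn tg \<mu>1 \<mu>2
    using assms by unfold_locales auto
  obtain k where "k \<noteq> 0" and kg: "\<And>s. s \<in> {a<..<b} \<Longrightarrow> kg s = k"
    using kg_constant by blast
  show ?thesis
    using isophotic_imp_kn_constant[OF kg \<open>k \<noteq> 0\<close> kn_nonzero]
      kn_constant_imp_isophotic[OF kg \<open>k \<noteq> 0\<close>]
    by blast
qed

end
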